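(* Let $\gamma\ge0$ be an integer. Then $$\omega_m^2C_{\gamma\gamma\gamma\gamma}-2\omega_\gamma^2C_{\gamma\gamma mm}\neq0\quad\text{for all integers } m\ge2\gamma+1,$$ and $D_{\gamma n}\ne0$ for all $n\in\{0,1,\dots,\gamma-1\}$, where $$D_{\gamma n}=\left[\omega_n^2C_{\gamma\gamma\gamma\gamma}-2\omega_\gamma^2C_{\gamma\gamma nn}\right]\left[\omega_{2\gamma-n}^2C_{\gamma\gamma\gamma\gamma}-2\omega_\gamma^2C_{\gamma,\gamma,2\gamma-n,2\gamma-n}\right]-\left[\omega_\gamma^2C_{\gamma,2\gamma-n,\gamma,n}\right]^2.$$
   Context: $\omega_n=n+1$ and $C_{ijkm}=\frac{2}{\pi}\int_{-1}^1U_i(y)U_j(y)U_k(y)U_m(y)\sqrt{1-y^2}\,dy$, where $U_n$ is the Chebyshev polynomial of the second kind of degree $n$ (equivalently $C_{ijkm}=\frac2\pi\int_0^\pi e_ie_je_ke_m\sin^2x\,dx$ with $e_n(x)=U_n(\cos x)$). *)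

theory Defs
  imports "HOL-Analysis.Analysis"
begin

fun chebU :: "nat \<Rightarrow> real \<Rightarrow> real" where
  "chebU 0 y = 1"
| "chebU (Suc 0) y = 2 * y"
| "chebU (Suc (Suc n)) y = 2 * y * chebU (Suc n) y - chebU n y"

definition omega :: "nat \<Rightarrow> real" where
  "omega n = real n + 1"

definition Ccoef :: "nat \<Rightarrow> nat \<Rightarrow> nat \<Rightarrow> nat \<Rightarrow> real" where
  "Ccoef i j k m = 2 / pi * integral {-1..1}
     (\<lambda>y. chebU i y * chebU j y * chebU k y * chebU m y * sqrt (1 - y\<^sup>2))"

definition Dcoef :: "nat \<Rightarrow> nat \<Rightarrow> real" where
  "Dcoef g n =
     (omega n ^ 2 * Ccoef g g g g - 2 * omega g ^ 2 * Ccoef g g n n)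
     * (omega (2*g - n) ^ 2 * Ccoef g g g g - 2 * omega g ^ 2 * Ccoef g g (2*g - n) (2*g - n))
     - (omega g ^ 2 * Ccoef g (2*g - n) g n) ^ 2"

end

theory Submission
  imports Defs "HOL-Computational_Algebra.Nth_Powers"
begin

text \<open>
  The substitution \<open>y = cos t\<close> turns \<open>U_k(y) sqrt(1 - y^2)\<close> into \<open>sin ((k + 1) t)\<close>, which gives
  the orthogonality of the \<open>U_k\<close> for the weight \<open>sqrt(1 - y^2)\<close>. Together with the
  linearization \<open>U_i U_(i+d) = U_d + U_(d+2) + ... + U_(d+2i)\<close> this evaluates
  \<open>C(a, a+d, b, b+d) = a + 1\<close> for \<open>a \<le> b\<close>. Hence the first expression equals
  \<open>(\<gamma> + 1)((m + 1)^2 - 2(\<gamma> + 1)^2)\<close>, which is nonzero because \<open>sqrt 2\<close> is irrational, and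
  \<open>D(\<gamma>, n) = -(\<gamma> + 1)^2 (n + 1) (\<gamma> - n)^2 (4\<gamma> - n + 3)\<close>.
\<close>

lemma chebU_cos: "chebU n (cos t) * sin t = sin ((real n + 1) * t)"
proof (induction n "cos t" rule: chebU.induct)
  case 1
  then show ?case by simp
next
  case 2
  then show ?case by (simp add: sin_double)
next
  case (3 n)
  have "sin ((real n + 3) * t) = 2 * cos t * sin ((real n + 2) * t) - sin ((real n + 1) * t)"
    using sin_add[of "(real n + 2) * t" t] sin_diff[of "(real n + 2) * t" t]
    by (simp add: algebra_simps)
  with 3 show ?case by (simp add: algebra_simps)
qed

definition sin_mult_sin_primitive :: "nat \<Rightarrow> real \<Rightarrow> real" where
  "sin_mult_sin_primitive k t =
     (if k = 0 then t / 2 - sin (2 * t) / 4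
      else sin (real k * t) / (2 * real k) - sin ((real k + 2) * t) / (2 * (real k + 2)))"

lemma sin_mult_sin_primitive_deriv:
  "(sin_mult_sin_primitive k has_real_derivative sin ((real k + 1) * t) * sin t) (at t)"
proof -
  have product_to_sum: "sin ((real k + 1) * t) * sin t = (cos (real k * t) - cos ((real k + 2) * t)) / 2"
    using cos_diff[of "(real k + 1) * t" t] cos_add[of "(real k + 1) * t" t]
    by (simp add: algebra_simps)
  show ?thesis
  proof (cases "k = 0")
    case True
    then show ?thesis
      unfolding sin_mult_sin_primitive_def[abs_def] product_to_sum
      by (auto intro!: derivative_eq_intros)
  next
    case False
    have "((\<lambda>t. sin (real k * t) / (2 * real k) - sin ((real k + 2) * t) / (2 * (real k + 2)))
        has_real_derivative
          cos (real k * t) * real k / (2 * real k) - cos ((real k + 2) * t) * (real k + 2) / (2 * (real k + 2)))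
        (at t)"
      by (auto intro!: derivative_eq_intros)
    moreover have "cos (real k * t) * real k / (2 * real k) - cos ((real k + 2) * t) * (real k + 2) / (2 * (real k + 2))
        = (cos (real k * t) - cos ((real k + 2) * t)) / 2"
      using False by (simp add: field_simps)
    ultimately show ?thesis
      unfolding sin_mult_sin_primitive_def[abs_def] product_to_sum using False
      by (simp only: if_False)
  qed
qed

lemma chebU_weight_integral:
  "((\<lambda>y. chebU k y * sqrt (1 - y\<^sup>2)) has_integral (if k = 0 then pi / 2 else 0)) {-1..1}"
proof -
  define F where "F y = - sin_mult_sin_primitive k (arccos y)" for y
  have "continuous_on UNIV (sin_mult_sin_primitive k)"
    using sin_mult_sin_primitive_deriv by (meson DERIV_isCont continuous_at_imp_continuous_on)
  then have "continuous_on {-1..1} F"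
    unfolding F_def by (intro continuous_intros continuous_on_compose2[OF _ continuous_on_arccos']) auto
  moreover have "(F has_vector_derivative chebU k y * sqrt (1 - y\<^sup>2)) (at y)"
    if y: "y \<in> {-1<..<1}" for y
  proof -
    have sin_arccos_y: "sin (arccos y) = sqrt (1 - y\<^sup>2)"
      using y by (simp add: sin_arccos)
    have "sqrt (1 - y\<^sup>2) > 0"
      using y by (simp add: abs_square_less_1 abs_less_iff)
    then have "- (sin ((real k + 1) * arccos y) * sin (arccos y) * inverse (- sqrt (1 - y\<^sup>2)))
        = chebU k y * sqrt (1 - y\<^sup>2)"
      using chebU_cos[of k "arccos y"] y sin_arccos_y by simp
    moreover have "(F has_real_derivative
        - (sin ((real k + 1) * arccos y) * sin (arccos y) * inverse (- sqrt (1 - y\<^sup>2)))) (at y)"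
      unfolding F_def[abs_def]
      by (intro DERIV_minus DERIV_chain2[OF sin_mult_sin_primitive_deriv] DERIV_arccos) (use y in auto)
    ultimately show ?thesis
      by (simp add: has_real_derivative_iff_has_vector_derivative)
  qed
  ultimately have "((\<lambda>y. chebU k y * sqrt (1 - y\<^sup>2)) has_integral (F 1 - F (-1))) {-1..1}"
    by (intro fundamental_theorem_of_calculus_interior) auto
  moreover have "sin (real k * pi) = 0" "sin ((real k + 2) * pi) = 0"
    using sin_npi[of k] sin_npi[of "k + 2"] by (simp_all add: algebra_simps)
  then have "F 1 - F (-1) = (if k = 0 then pi / 2 else 0)"
    by (simp add: F_def sin_mult_sin_primitive_def)
  ultimately show ?thesis by simp
qed

lemma chebU_mult: "chebU i y * chebU (i + d) y = (\<Sum>r\<le>i. chebU (d + 2 * r) y)"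
proof (induction i y arbitrary: d rule: chebU.induct)
  case (1 y)
  then show ?case by simp
next
  case (2 y)
  then show ?case by (cases d) (simp_all add: algebra_simps)
next
  case (3 i y)
  have "chebU (Suc (Suc i)) y * chebU (Suc (Suc i) + d) y
      = 2 * y * (chebU (Suc i) y * chebU (Suc i + Suc d) y) - chebU i y * chebU (i + Suc (Suc d)) y"
    by (simp add: algebra_simps)
  also have "\<dots> = (\<Sum>r\<le>Suc i. 2 * y * chebU (Suc (d + 2 * r)) y) - (\<Sum>r\<le>i. chebU (Suc (Suc d) + 2 * r) y)"
    unfolding "3.IH" sum_distrib_left by (simp only: add_Suc)
  also have "\<dots> = (\<Sum>r\<le>Suc i. chebU (Suc (Suc d) + 2 * r) y) + (\<Sum>r\<le>Suc i. chebU (d + 2 * r) y)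
      - (\<Sum>r\<le>i. chebU (Suc (Suc d) + 2 * r) y)"
  proof -
    have "2 * y * chebU (Suc k) y = chebU (Suc (Suc k)) y + chebU k y" for k
      by simp
    then show ?thesis by (simp only: sum.distrib add_Suc)
  qed
  also have "\<dots> = (\<Sum>r\<le>Suc (Suc i). chebU (d + 2 * r) y)"
    by (simp add: sum.atMost_Suc[of _ i] sum.atMost_Suc[of _ "Suc i"] algebra_simps)
  finally show ?case .
qed

lemma chebU_orthogonal:
  "((\<lambda>y. chebU p y * chebU q y * sqrt (1 - y\<^sup>2)) has_integral (if p = q then pi / 2 else 0)) {-1..1}"
proof -
  have shifted: "((\<lambda>y. chebU p y * chebU (p + d) y * sqrt (1 - y\<^sup>2)) has_integral
      (if d = 0 then pi / 2 else 0)) {-1..1}" for p d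
  proof -
    have "((\<lambda>y. \<Sum>r\<le>p. chebU (d + 2 * r) y * sqrt (1 - y\<^sup>2)) has_integral
        (\<Sum>r\<le>p. if d + 2 * r = 0 then pi / 2 else 0)) {-1..1}"
      by (intro has_integral_sum chebU_weight_integral) simp
    moreover have "(\<Sum>r\<le>p. if d + 2 * r = 0 then pi / 2 else (0::real)) = (if d = 0 then pi / 2 else 0)"
      by (simp add: sum.delta)
    ultimately show ?thesis
      by (simp add: chebU_mult sum_distrib_right)
  qed
  show ?thesis
    using shifted[of p "q - p"] shifted[of q "p - q"]
    by (cases "p \<le> q") (auto simp: mult.commute)
qed

lemma Ccoef_shifted_pairs:
  assumes "a \<le> b"
  shows "Ccoef a (a + d) b (b + d) = real a + 1"
proof -
  have integrand: "(\<Sum>r\<le>a. \<Sum>q\<le>b. chebU (d + 2 * r) y * chebU (d + 2 * q) y * sqrt (1 - y\<^sup>2))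
      = chebU a y * chebU (a + d) y * chebU b y * chebU (b + d) y * sqrt (1 - y\<^sup>2)" for y
  proof -
    have "(\<Sum>r\<le>a. \<Sum>q\<le>b. chebU (d + 2 * r) y * chebU (d + 2 * q) y * sqrt (1 - y\<^sup>2))
        = (chebU a y * chebU (a + d) y) * (chebU b y * chebU (b + d) y) * sqrt (1 - y\<^sup>2)"
      unfolding chebU_mult sum_product by (simp add: sum_distrib_right)
    then show ?thesis by (simp add: mult.assoc)
  qed
  have diagonal_sum: "(\<Sum>r\<le>a. \<Sum>q\<le>b. if d + 2 * r = d + 2 * q then pi / 2 else 0) = (real a + 1) * pi / 2"
    using assms by (simp add: sum.delta')
  have "((\<lambda>y. \<Sum>r\<le>a. \<Sum>q\<le>b. chebU (d + 2 * r) y * chebU (d + 2 * q) y * sqrt (1 - y\<^sup>2))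
      has_integral (\<Sum>r\<le>a. \<Sum>q\<le>b. if d + 2 * r = d + 2 * q then pi / 2 else 0)) {-1..1}"
    by (intro has_integral_sum chebU_orthogonal) auto
  then show ?thesis
    unfolding Ccoef_def integrand diagonal_sum by (simp add: integral_unique)
qed

lemma Ccoef_swap_pairs: "Ccoef i j k m = Ccoef k m i j"
  unfolding Ccoef_def by (simp add: ac_simps)

lemma Ccoef_swap_first: "Ccoef i j k m = Ccoef j i k m"
  unfolding Ccoef_def by (simp add: ac_simps)

lemma Ccoef_diag_pairs: "Ccoef a a b b = real (min a b) + 1"
  using Ccoef_shifted_pairs[of a b 0] Ccoef_shifted_pairs[of b a 0] Ccoef_swap_pairs[of a a b b]
  by (cases "a \<le> b") auto

lemma Ccoef_reflected:
  assumes "n \<le> g"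
  shows "Ccoef g (2 * g - n) g n = real n + 1"
proof -
  have "n + (g - n) = g" "g + (g - n) = 2 * g - n"
    using assms by auto
  then have "Ccoef n g g (2 * g - n) = real n + 1"
    using Ccoef_shifted_pairs[OF assms, of "g - n"] by simp
  then show ?thesis
    by (metis Ccoef_swap_first Ccoef_swap_pairs)
qed

lemma square_ne_double_square:
  fixes a b :: nat
  assumes "b \<noteq> 0"
  shows "a\<^sup>2 \<noteq> 2 * b\<^sup>2"
proof
  assume "a\<^sup>2 = 2 * b\<^sup>2"
  then have "is_nth_power 2 (2 * b\<^sup>2)"
    by (metis is_nth_power_nth_power)
  then have "is_nth_power 2 (2 ^ 1 :: nat)"
    using assms by (simp add: is_nth_power_mult_cancel_right)
  then show False
    by (simp only: is_nth_power_prime_power_nat_iff[OF two_is_prime_nat]) simp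
qed

lemma omega_Ccoef_diag_diff_eq:
  assumes "g \<le> m"
  shows "omega m ^ 2 * Ccoef g g g g - 2 * omega g ^ 2 * Ccoef g g m m
    = (real g + 1) * ((real m + 1)\<^sup>2 - 2 * (real g + 1)\<^sup>2)"
  using assms by (simp add: omega_def Ccoef_diag_pairs algebra_simps)

lemma Dcoef_eq:
  assumes "n \<le> g"
  shows "Dcoef g n = - ((real g + 1)\<^sup>2 * (real n + 1) * (real g - real n)\<^sup>2 * (4 * real g - real n + 3))"
proof -
  have C: "Ccoef g g g g = real g + 1" "Ccoef g g n n = real n + 1"
      "Ccoef g g (2 * g - n) (2 * g - n) = real g + 1" "Ccoef g (2 * g - n) g n = real n + 1"
    using assms by (simp_all add: Ccoef_diag_pairs Ccoef_reflected)
  have omega: "omega g = real g + 1" "omega n = real n + 1" "omega (2 * g - n) = 2 * real g - real n + 1"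
    using assms by (simp_all add: omega_def)
  show ?thesis
    unfolding Dcoef_def C omega by (simp add: algebra_simps power2_eq_square power4_eq_xxxx)
qed

theorem proposition7p2:
  fixes g :: nat
  shows "(\<forall>m::nat. m \<ge> 2*g + 1 \<longrightarrow>
            omega m ^ 2 * Ccoef g g g g - 2 * omega g ^ 2 * Ccoef g g m m \<noteq> 0)
         \<and> (\<forall>n::nat. n < g \<longrightarrow> Dcoef g n \<noteq> 0)"
proof (intro conjI allI impI notI)
  fix m :: nat
  assume "2 * g + 1 \<le> m"
    and "omega m ^ 2 * Ccoef g g g g - 2 * omega g ^ 2 * Ccoef g g m m = 0"
  then have "(real m + 1)\<^sup>2 = 2 * (real g + 1)\<^sup>2"
    by (simp add: omega_Ccoef_diag_diff_eq)
  then have "real ((m + 1)\<^sup>2) = real (2 * (g + 1)\<^sup>2)"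
    by (simp add: add.commute)
  then have "(m + 1)\<^sup>2 = 2 * (g + 1)\<^sup>2"
    by (simp only: of_nat_eq_iff)
  moreover have "(m + 1)\<^sup>2 \<noteq> 2 * (g + 1)\<^sup>2"
    by (rule square_ne_double_square) simp
  ultimately show False
    by contradiction
next
  fix n :: nat
  assume "n < g" and "Dcoef g n = 0"
  then have "(real g + 1)\<^sup>2 * (real n + 1) * (real g - real n)\<^sup>2 * (4 * real g - real n + 3) = 0"
    by (simp only: Dcoef_eq less_imp_le neg_equal_0_iff_equal)
  with \<open>n < g\<close> show False
    by simp
qed

end
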